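(* Let $W$ be an eventually periodic subset of $\mathbb{Z}^d$ with periods $u_1,\dots,u_d$, and let $\mathscr{W}_1,\mathcal{W}$ be as defined in the context. If the ordered pair $(\pi(\mathscr{W}_1),\pi(\mathcal{W}))$ admits a minimal complement in $\mathbb{Z}^d/\mathcal{L}$, then $W$ has a minimal complement in $\mathbb{Z}^d$.
   Context: $d\geqslant1$, $\mathbb{N}=\{0,1,2,\dots\}$. Let $u_1,\dots,u_d\in\mathbb{Z}^d$ satisfy no nontrivial $\mathbb{Z}$-linear relation, $\mathcal{L}=\mathbb{Z}u_1+\dots+\mathbb{Z}u_d$, $P=\mathbb{N}u_1+\dots+\mathbb{N}u_d$, $\pi:\mathbb{Z}^d\to\mathbb{Z}^d/\mathcal{L}$ the quotient map. A nonempty $X\subseteq\mathbb{Z}^d$ is eventually periodic with periods $u_1,\dots,u_d$ if $X\subseteq F+P$ for some nonempty finite $F\subseteq\mathbb{Z}^d$ and $x+P\subseteq X$ for all but finitely many $x\in X$. For such $W$: $\mathscr{W}=\{w\in W:w+P\not\subseteq W\}$; $\mathcal{W}=\{w\in W\setminus\mathscr{W}:(w-P)\cap(W\setminus\mathscr{W})=\{w\}\}$; $\mathscr{W}_1$ is the set of elements of $\mathscr{W}$ congruent modulo $\mathcal{L}$ to no element of $\mathcal{W}$. An ordered pair $(\mathscr{Q}_1,\mathcal{Q})$ of two nonempty disjoint subsets of $\mathbb{Z}^d/\mathcal{L}$ admits a minimal complement in $\mathbb{Z}^d/\mathcal{L}$ if there is a nonempty $\mathcal{N}\subseteq\mathbb{Z}^d/\mathcal{L}$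 with (i) $\mathcal{N}+(\mathcal{Q}\cup\mathscr{Q}_1)=\mathbb{Z}^d/\mathcal{L}$ and (ii) for every $n\in\mathcal{N}$ there is $q\in\mathscr{Q}_1$ with $n+q\neq n'+q'$ for all $n'\in\mathcal{N}\setminus\{n\}$, $q'\in\mathcal{Q}\cup\mathscr{Q}_1$. A nonempty $M\subseteq\mathbb{Z}^d$ is a complement of $W$ if $M+W=\mathbb{Z}^d$, and a minimal complement if no proper subset of $M$ is a complement of $W$. *)

theory Defs
  imports "HOL-Analysis.Analysis"
begin

text \<open>Z^d is modelled as int^'d for a finite index type 'd (d = CARD('d) >= 1).
  The periods u_1..u_d are a family u :: 'd => int^'d.\<close>

definition zlin_indep :: "('d::finite \<Rightarrow> int^'d) \<Rightarrow> bool" where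
  "zlin_indep u \<longleftrightarrow> (\<forall>c::'d \<Rightarrow> int. (\<Sum>i\<in>UNIV. c i *s u i) = 0 \<longrightarrow> (\<forall>i. c i = 0))"

definition latt :: "('d::finite \<Rightarrow> int^'d) \<Rightarrow> (int^'d) set" where
  "latt u = {\<Sum>i\<in>UNIV. c i *s u i | c. True}"

definition cone :: "('d::finite \<Rightarrow> int^'d) \<Rightarrow> (int^'d) set" where
  "cone u = {\<Sum>i\<in>UNIV. c i *s u i | c. \<forall>i. c i \<ge> 0}"

definition setsum :: "('a::plus) set \<Rightarrow> 'a set \<Rightarrow> 'a set" where
  "setsum A B = {a + b | a b. a \<in> A \<and> b \<in> B}"

definition qmap :: "('d::finite \<Rightarrow> int^'d) \<Rightarrow> int^'d \<Rightarrow> (int^'d) set" where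
  "qmap u x = (\<lambda>l. x + l) ` latt u"

definition quot :: "('d::finite \<Rightarrow> int^'d) \<Rightarrow> (int^'d) set set" where
  "quot u = range (qmap u)"

definition eventually_periodic :: "('d::finite \<Rightarrow> int^'d) \<Rightarrow> (int^'d) set \<Rightarrow> bool" where
  "eventually_periodic u X \<longleftrightarrow> X \<noteq> {} \<and>
     (\<exists>F. finite F \<and> F \<noteq> {} \<and> X \<subseteq> setsum F (cone u)) \<and>
     finite {x \<in> X. \<not> ((\<lambda>p. x + p) ` cone u \<subseteq> X)}"

definition scrW :: "('d::finite \<Rightarrow> int^'d) \<Rightarrow> (int^'d) set \<Rightarrow> (int^'d) set" where
  "scrW u W = {w \<in> W. \<not> ((\<lambda>p. w + p) ` cone u \<subseteq> W)}"

definition calW :: "('d::finite \<Rightarrow> int^'d) \<Rightarrow> (int^'d) set \<Rightarrow> (int^'d) set" where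
  "calW u W = {w \<in> W - scrW u W. (\<lambda>p. w - p) ` cone u \<inter> (W - scrW u W) = {w}}"

definition scrW1 :: "('d::finite \<Rightarrow> int^'d) \<Rightarrow> (int^'d) set \<Rightarrow> (int^'d) set" where
  "scrW1 u W = {w \<in> scrW u W. \<forall>v \<in> calW u W. w - v \<notin> latt u}"

text \<open>Ordered pair (Q1, Q) of nonempty disjoint subsets of Z^d/L admitting a minimal
  complement; the sum of classes is the Minkowski sum of cosets.\<close>
definition admits_min_compl_quot ::
  "('d::finite \<Rightarrow> int^'d) \<Rightarrow> (int^'d) set set \<Rightarrow> (int^'d) set set \<Rightarrow> bool" where
  "admits_min_compl_quot u Q1 Q \<longleftrightarrow>
     Q1 \<subseteq> quot u \<and> Q \<subseteq> quot u \<and> Q1 \<noteq> {} \<and> Q \<noteq> {} \<and> Q1 \<inter> Q = {} \<and>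
     (\<exists>N. N \<noteq> {} \<and> N \<subseteq> quot u \<and>
        {setsum n q | n q. n \<in> N \<and> q \<in> Q \<union> Q1} = quot u \<and>
        (\<forall>n\<in>N. \<exists>q\<in>Q1. \<forall>n'\<in>N - {n}. \<forall>q'\<in>Q \<union> Q1. setsum n q \<noteq> setsum n' q'))"

definition is_complement :: "('a::plus) set \<Rightarrow> 'a set \<Rightarrow> bool" where
  "is_complement M W \<longleftrightarrow> M \<noteq> {} \<and> setsum M W = UNIV"

definition is_min_complement :: "('a::plus) set \<Rightarrow> 'a set \<Rightarrow> bool" where
  "is_min_complement M W \<longleftrightarrow> is_complement M W \<and> (\<forall>M'. M' \<subset> M \<longrightarrow> \<not> is_complement M' W)"

end

theory Submission
  imports Defs
begin

text \<open>Let N be the minimal complement of the quotient and M0 = pi^-1(N), a complement of W.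
  Choose c = D k with c Z^d inside L and k larger than the size of scrW and than every
  coordinate difference within scrW. Among the complements of W inside M0 that are periodic
  modulo c Z^d, take one, M, meeting the box [0,c)^d in the fewest points. If M' is a proper
  subcomplement and m is in M but not in M', deleting the class m + c Z^d from M leaves a
  smaller periodic set, which therefore misses some m + w. Write m + w = m' + w' with m' in M';
  then m' lies in m + c Z^d. If w is congruent modulo L to a point z of calW, the cone above z
  lets another point of M in the L-class of m, outside m + c Z^d, reach m + w; such a point
  exists by a pigeonhole argument on scrW using the witness of the class of m. Otherwise w and
  w' lie in scrW and differ by a vector in c Z^d, so they agree and m' = m.\<close>

abbreviation lincomb :: "('d::finite \<Rightarrow> int^'d) \<Rightarrow> ('d \<Rightarrow> int) \<Rightarrow> int^'d" where
  "lincomb u c \<equiv> \<Sum>i\<in>UNIV. c i *s u i"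

lemma lincomb_add: "lincomb u a + lincomb u b = lincomb u (\<lambda>i. a i + b i)"
  by (simp add: sum.distrib vector_sadd_rdistrib)

lemma lincomb_diff: "lincomb u a - lincomb u b = lincomb u (\<lambda>i. a i - b i)"
  by (simp add: sum_subtractf vector_sub_rdistrib)

lemma lincomb_scale: "k *s lincomb u a = lincomb u (\<lambda>i. k * a i)"
  by (simp add: scaleR_sum_right vector_smult_assoc flip: sum_cmul)

lemma zlin_indep_lincomb_inj:
  assumes "zlin_indep u" "lincomb u a = lincomb u b"
  shows "a = b"
proof -
  have "lincomb u (\<lambda>i. a i - b i) = 0"
    using assms(2) lincomb_diff[where u=u and a=a and b=b] by simp
  then show ?thesis
    using assms(1) unfolding zlin_indep_def by fastforce
qed

lemma mem_latt_iff: "x \<in> latt u \<longleftrightarrow> (\<exists>c. x = lincomb u c)"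
  unfolding latt_def by auto

lemma mem_cone_iff: "x \<in> cone u \<longleftrightarrow> (\<exists>c. (\<forall>i. c i \<ge> 0) \<and> x = lincomb u c)"
  unfolding cone_def by auto

lemma latt_add: "x \<in> latt u \<Longrightarrow> y \<in> latt u \<Longrightarrow> x + y \<in> latt u"
proof -
  assume "x \<in> latt u" "y \<in> latt u"
  then obtain a b where "x = lincomb u a" "y = lincomb u b" unfolding mem_latt_iff by blast
  then have "x + y = lincomb u (\<lambda>i. a i + b i)" by (simp only: lincomb_add)
  then show ?thesis unfolding mem_latt_iff by (rule exI[of _ "\<lambda>i. a i + b i"])
qed

lemma latt_diff: "x \<in> latt u \<Longrightarrow> y \<in> latt u \<Longrightarrow> x - y \<in> latt u"
proof -
  assume "x \<in> latt u" "y \<in> latt u"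
  then obtain a b where "x = lincomb u a" "y = lincomb u b" unfolding mem_latt_iff by blast
  then have "x - y = lincomb u (\<lambda>i. a i - b i)" by (simp only: lincomb_diff)
  then show ?thesis unfolding mem_latt_iff by (rule exI[of _ "\<lambda>i. a i - b i"])
qed

lemma zero_in_latt: "0 \<in> latt u"
  unfolding mem_latt_iff by (intro exI[of _ "\<lambda>i. 0"]) simp

lemma cone_subset_latt: "cone u \<subseteq> latt u"
  unfolding latt_def cone_def by blast

lemma zero_in_cone: "0 \<in> cone u"
  unfolding mem_cone_iff by (intro exI[of _ "\<lambda>i. 0"]) simp

lemma setsum_iff: "x \<in> setsum A B \<longleftrightarrow> (\<exists>a\<in>A. \<exists>b\<in>B. x = a + b)"
  unfolding setsum_def by blast

lemma qmap_eq_iff: "qmap u a = qmap u b \<longleftrightarrow> a - b \<in> latt u"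
proof
  assume "qmap u a = qmap u b"
  then have "a \<in> (+) b ` latt u"
    using zero_in_latt unfolding qmap_def by (metis add.right_neutral imageI)
  then show "a - b \<in> latt u" by auto
next
  assume ab: "a - b \<in> latt u"
  have "(+) a ` latt u \<subseteq> (+) b ` latt u" if "a - b \<in> latt u" for a b
  proof
    fix x assume "x \<in> (+) a ` latt u"
    then obtain l where "l \<in> latt u" "x = b + (a - b + l)" by auto
    then show "x \<in> (+) b ` latt u" using latt_add[OF that] by blast
  qed
  moreover have "b - a \<in> latt u" using latt_diff[OF zero_in_latt ab] by simp
  ultimately show "qmap u a = qmap u b" unfolding qmap_def using ab by blast
qed

lemma setsum_qmap: "setsum (qmap u a) (qmap u b) = qmap u (a + b)"
proof (rule set_eqI, rule iffI)
  fix x assume "x \<in> setsum (qmap u a) (qmap u b)"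
  then obtain l1 l2 where "l1 \<in> latt u" "l2 \<in> latt u" "x = (a + b) + (l1 + l2)"
    unfolding setsum_def qmap_def by (auto simp: algebra_simps)
  then show "x \<in> qmap u (a + b)" unfolding qmap_def by (blast intro: latt_add)
next
  fix x assume "x \<in> qmap u (a + b)"
  then obtain l where l: "l \<in> latt u" "x = (a + l) + b" unfolding qmap_def by (auto simp: algebra_simps)
  have "a + l \<in> qmap u a" "b \<in> qmap u b"
    using l(1) zero_in_latt unfolding qmap_def by (blast, force)
  then show "x \<in> setsum (qmap u a) (qmap u b)"
    unfolding setsum_def using l(2) by (intro CollectI exI[of _ "a + l"] exI[of _ b]) simp
qed

section \<open>A multiple of Z^d inside the lattice\<close>

definition rat_matrix :: "('d::finite \<Rightarrow> int^'d) \<Rightarrow> rat^'d^'d" where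
  "rat_matrix u = (\<chi> i j. of_int (u j $ i))"

lemma rat_matrix_mult_of_int:
  "rat_matrix u *v (\<chi> j. of_int (c j)) = (\<chi> i. of_int (lincomb u c $ i))"
  by (simp add: rat_matrix_def matrix_vector_mult_def sum_component vec_eq_iff mult.commute)

lemma int_vec_if_Ints:
  fixes x :: "rat^'d::finite"
  assumes "\<And>j. x $ j \<in> \<int>"
  obtains c where "x = (\<chi> j. of_int (c j))"
proof -
  have "\<forall>j. \<exists>t. x $ j = of_int t" using assms by (metis Ints_cases)
  then obtain c where "\<And>j. x $ j = of_int (c j)" by metis
  then show ?thesis by (intro that[of c]) (simp add: vec_eq_iff)
qed

lemma ex_common_denominator:
  fixes z :: "rat^'d::finite"
  obtains den :: int where "den > 0" "\<And>j. of_int den * z $ j \<in> \<int>"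
proof
  define den where "den = (\<Prod>j\<in>UNIV. snd (quotient_of (z $ j)))"
  show "den > 0" unfolding den_def by (intro prod_pos) (simp add: quotient_of_denom_pos')
  fix j
  obtain a b where ab: "quotient_of (z $ j) = (a, b)" by fastforce
  have "den = b * (\<Prod>j'\<in>UNIV - {j}. snd (quotient_of (z $ j')))"
    unfolding den_def using ab prod.remove[of UNIV j "\<lambda>j. snd (quotient_of (z $ j))"] by simp
  then have "of_int den * z $ j = of_int (a * (\<Prod>j'\<in>UNIV - {j}. snd (quotient_of (z $ j'))))"
    using quotient_of_div[OF ab] quotient_of_denom_pos[OF ab] by simp
  then show "of_int den * z $ j \<in> \<int>" by (metis Ints_of_int)
qed

lemma det_rat_matrix_nonzero:
  assumes "zlin_indep u"
  shows "det (rat_matrix u) \<noteq> 0"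
proof -
  have kernel: "z = 0" if "rat_matrix u *v z = 0" for z
  proof -
    obtain den :: int where den: "den > 0" "\<And>j. of_int den * z $ j \<in> \<int>"
      using ex_common_denominator[of z] by blast
    then have "\<And>j. (of_int den *s z) $ j \<in> \<int>" by simp
    then obtain c where c: "of_int den *s z = (\<chi> j. of_int (c j))"
      by (rule int_vec_if_Ints)
    have "(\<chi> i. of_int (lincomb u c $ i)) = rat_matrix u *v (of_int den *s z)"
      by (simp only: c rat_matrix_mult_of_int)
    also have "\<dots> = 0" using that by (simp add: vector_scalar_commute)
    finally have "\<forall>i. of_int (lincomb u c $ i) = (0 :: rat)"
      by (simp only: vec_eq_iff vec_lambda_beta zero_index simp_thms)
    then have "lincomb u c = lincomb u (\<lambda>i. 0)"
      by (simp only: of_int_eq_0_iff) (simp add: vec_eq_iff)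
    then have "c = (\<lambda>i. 0)" by (rule zlin_indep_lincomb_inj[OF assms])
    then have "of_int den *s z = 0" using c by (simp add: vec_eq_iff)
    then show "z = 0" using den(1) by (simp add: vec_eq_iff)
  qed
  have "inj ((*v) (rat_matrix u))"
  proof (rule injI)
    fix x y assume "rat_matrix u *v x = rat_matrix u *v y"
    then have "rat_matrix u *v (x - y) = 0" by (simp add: matrix_vector_mult_diff_distrib)
    then have "x - y = 0" by (rule kernel)
    then show "x = y" by simp
  qed
  then show ?thesis
    using det_nz_iff_inj_gen[OF matrix_vector_mul_linear_gen[of "rat_matrix u"]]
    by (simp add: matrix_of_matrix_vector_mul)
qed

lemma det_Ints:
  fixes A :: "rat^'n::finite^'n"
  assumes "\<And>i j. A $ i $ j \<in> \<int>"
  shows "det A \<in> \<int>"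
  unfolding det_def by (intro Ints_sum Ints_mult Ints_prod Ints_of_int assms)

text \<open>By Cramer's rule, d = det (rat_matrix u) times an integer vector has integer coordinates
  with respect to the periods; d * d is the positive multiplier.\<close>
lemma latt_contains_multiples:
  fixes u :: "'d::finite \<Rightarrow> int^'d"
  assumes "zlin_indep u"
  obtains D :: int where "D > 0" "\<And>g. D *s g \<in> latt u"
proof -
  let ?U = "rat_matrix u"
  have "det ?U \<in> \<int>" by (rule det_Ints) (simp add: rat_matrix_def)
  then obtain d where d: "det ?U = of_int d" by (metis Ints_cases)
  have dnz: "det ?U \<noteq> 0" using det_rat_matrix_nonzero[OF assms] .
  have mult_d: "d *s g \<in> latt u" for g
  proof -
    define b :: "rat^'d" where "b = (\<chi> i. of_int (g $ i))"
    define x :: "rat^'d" where "x = (\<chi> k. det (\<chi> i j. if j = k then b $ i else ?U $ i $ j) / det ?U)"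
    have "(of_int d *s x) $ k \<in> \<int>" for k
    proof -
      have "(of_int d *s x) $ k = det (\<chi> i j. if j = k then b $ i else ?U $ i $ j)"
        using d dnz by (simp add: x_def)
      also have "\<dots> \<in> \<int>" by (rule det_Ints) (simp add: rat_matrix_def b_def)
      finally show ?thesis .
    qed
    then obtain c where c: "of_int d *s x = (\<chi> j. of_int (c j))"
      by (rule int_vec_if_Ints)
    have Ux: "?U *v x = b" using cramer[OF dnz, of x b] x_def by simp
    have "(\<chi> i. of_int (lincomb u c $ i)) = ?U *v (of_int d *s x)"
      by (simp only: c rat_matrix_mult_of_int)
    also have "\<dots> = of_int d *s b" by (simp add: vector_scalar_commute Ux)
    finally have "\<forall>i. of_int (lincomb u c $ i) = (of_int (d * g $ i) :: rat)"
      by (simp only: vec_eq_iff vec_lambda_beta vector_smult_component b_def of_int_mult simp_thms)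
    then have "\<forall>i. lincomb u c $ i = d * g $ i" by (simp only: of_int_eq_iff simp_thms)
    then have "d *s g = lincomb u c" by (simp add: vec_eq_iff)
    then show ?thesis unfolding mem_latt_iff by (rule exI[of _ c])
  qed
  show ?thesis
  proof
    show "d * d > 0" using dnz d by (auto simp: zero_less_mult_iff)
    show "(d * d) *s g \<in> latt u" for g
      using mult_d[of "d *s g"] by (simp add: vector_smult_assoc)
  qed
qed

section \<open>The exceptional sets scrW, calW and scrW1\<close>

lemma finite_scrW: "eventually_periodic u W \<Longrightarrow> finite (scrW u W)"
  unfolding eventually_periodic_def scrW_def by blast

lemma calW_subset: "calW u W \<subseteq> W"
  unfolding calW_def by blast

lemma scrW_subset: "scrW u W \<subseteq> W"
  unfolding scrW_def by blast

lemma scrW1_subset: "scrW1 u W \<subseteq> scrW u W"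
  unfolding scrW1_def by blast

lemma calW_add_cone: "z \<in> calW u W \<Longrightarrow> p \<in> cone u \<Longrightarrow> z + p \<in> W"
  unfolding calW_def scrW_def by blast

lemma cone_coeffs_bounded:
  assumes zi: "zlin_indep u" and "finite F" and W: "W \<subseteq> setsum F (cone u)"
  obtains B where "\<And>x a. x \<in> W \<Longrightarrow> \<forall>i. a i \<ge> 0 \<Longrightarrow> w - x = lincomb u a \<Longrightarrow> sum a UNIV \<le> B"
proof
  define E where "E f = (SOME e. (\<forall>i. e i \<ge> 0) \<and> w - f = lincomb u e)" for f
  fix x a assume x: "x \<in> W" and a: "\<forall>i. a i \<ge> 0" "w - x = lincomb u a"
  obtain f b where f: "f \<in> F" "\<forall>i. b i \<ge> 0" "x = f + lincomb u b"
    using x W unfolding setsum_def mem_cone_iff by blast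
  have "w - f = lincomb u a + lincomb u b"
    using a(2) f(3) by (simp add: algebra_simps)
  then have wf: "w - f = lincomb u (\<lambda>i. a i + b i)" by (simp only: lincomb_add)
  then have "\<exists>e. (\<forall>i. e i \<ge> 0) \<and> w - f = lincomb u e"
    using a(1) f(2) by (metis add_nonneg_nonneg)
  then have "w - f = lincomb u (E f)"
    unfolding E_def by (rule someI2_ex) blast
  then have "E f = (\<lambda>i. a i + b i)"
    using wf zlin_indep_lincomb_inj[OF zi] by metis
  then have "sum a UNIV \<le> sum (E f) UNIV"
    using f(2) by (simp add: sum.distrib sum_nonneg)
  also have "\<dots> \<le> \<bar>sum (E f) UNIV\<bar>" by (rule abs_ge_self)
  also have "\<dots> \<le> (\<Sum>f\<in>F. \<bar>sum (E f) UNIV\<bar>)"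
    using f(1) assms(2) by (intro member_le_sum) auto
  finally show "sum a UNIV \<le> (\<Sum>f\<in>F. \<bar>sum (E f) UNIV\<bar>)" .
qed

text \<open>A point x of W - scrW in w - cone u that maximises the coefficient sum of w - x lies in
  calW; the maximum exists by cone_coeffs_bounded.\<close>
lemma ex_calW_below:
  fixes u :: "'d::finite \<Rightarrow> int^'d"
  assumes zi: "zlin_indep u" and ep: "eventually_periodic u W" and w: "w \<in> W - scrW u W"
  shows "\<exists>v\<in>calW u W. w - v \<in> cone u"
proof -
  obtain F where "finite F" "W \<subseteq> setsum F (cone u)"
    using ep unfolding eventually_periodic_def by blast
  then obtain B where B: "\<And>x a. x \<in> W \<Longrightarrow> \<forall>i. a i \<ge> 0 \<Longrightarrow> w - x = lincomb u a \<Longrightarrow> sum a UNIV \<le> B"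
    using cone_coeffs_bounded[OF zi] by blast
  define P where "P a \<longleftrightarrow> (\<forall>i. a i \<ge> 0) \<and> w - lincomb u a \<in> W - scrW u W" for a :: "'d \<Rightarrow> int"
  have "P (\<lambda>i. 0)" using w unfolding P_def by simp
  moreover have "nat (sum a UNIV) < nat B + 1" if "P a" for a
  proof -
    have "sum a UNIV \<le> B" using that B[of "w - lincomb u a" a] unfolding P_def by simp
    then show ?thesis using nat_mono by fastforce
  qed
  ultimately obtain a where a: "P a" and max: "\<And>b. P b \<Longrightarrow> nat (sum b UNIV) \<le> nat (sum a UNIV)"
    using Lattices_Big.ex_has_greatest_nat[of P _ "\<lambda>a. nat (sum a UNIV)"] by blast
  let ?x = "w - lincomb u a"
  have Pa: "(\<forall>i. a i \<ge> 0) \<and> ?x \<in> W - scrW u W" using a unfolding P_def .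
  have a_nonneg: "\<forall>i. a i \<ge> 0" using Pa by (rule conjunct1)
  have x_mem: "?x \<in> W - scrW u W" using Pa by (rule conjunct2)
  have "y = ?x" if y: "y \<in> (\<lambda>p. ?x - p) ` cone u" "y \<in> W - scrW u W" for y :: "int^'d"
  proof -
    obtain p where p: "p \<in> cone u" "y = ?x - p" using y(1) by blast
    then obtain b where b: "\<forall>i. b i \<ge> 0" "y = ?x - lincomb u b"
      unfolding mem_cone_iff by blast
    have "y = w - (lincomb u a + lincomb u b)" using b(2) by simp
    then have "y = w - lincomb u (\<lambda>i. a i + b i)" by (simp only: lincomb_add)
    moreover have "\<forall>i. a i + b i \<ge> 0" using a_nonneg b(1) by (simp add: add_nonneg_nonneg)
    ultimately have "P (\<lambda>i. a i + b i)" using y(2) unfolding P_def by (simp only: simp_thms)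
    then have "nat (sum (\<lambda>i. a i + b i) UNIV) \<le> nat (sum a UNIV)" by (rule max)
    moreover have "sum a UNIV \<ge> 0" "sum b UNIV \<ge> 0"
      using a_nonneg b(1) by (auto intro: sum_nonneg)
    ultimately have "sum b UNIV = 0" by (simp add: sum.distrib)
    then have "\<forall>i. b i = 0" using b(1) by (simp add: sum_nonneg_eq_0_iff)
    then show "y = ?x" using b(2) by simp
  qed
  moreover have "?x \<in> (\<lambda>p. ?x - p) ` cone u" using zero_in_cone by force
  ultimately have "?x \<in> calW u W" using x_mem unfolding calW_def by blast
  moreover have "w - ?x \<in> cone u" using a_nonneg unfolding mem_cone_iff by auto
  ultimately show ?thesis by blast
qed

lemma scrW_if_not_congruent_calW:
  assumes "zlin_indep u" "eventually_periodic u W" "w \<in> W" "\<forall>v\<in>calW u W. w - v \<notin> latt u"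
  shows "w \<in> scrW u W"
  using ex_calW_below[OF assms(1,2)] assms(3,4) cone_subset_latt by blast

lemma scrW1_congruent:
  assumes "zlin_indep u" "eventually_periodic u W" "s \<in> scrW1 u W" "w \<in> W" "w - s \<in> latt u"
  shows "w \<in> scrW1 u W"
proof -
  have "\<forall>v\<in>calW u W. w - v \<notin> latt u"
  proof (intro ballI notI)
    fix v assume "v \<in> calW u W" "w - v \<in> latt u"
    moreover have "s - v = (w - v) - (w - s)" by simp
    ultimately show False using assms(3,5) latt_diff unfolding scrW1_def by fastforce
  qed
  then show ?thesis
    using scrW_if_not_congruent_calW[OF assms(1,2,4)] unfolding scrW1_def by blast
qed

lemma qmap_calW_scrW1:
  assumes "zlin_indep u" "eventually_periodic u W"
  shows "qmap u ` calW u W \<union> qmap u ` scrW1 u W = qmap u ` W"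
proof
  show "qmap u ` calW u W \<union> qmap u ` scrW1 u W \<subseteq> qmap u ` W"
    using calW_subset scrW1_subset scrW_subset by (intro Un_least image_mono) blast+
  show "qmap u ` W \<subseteq> qmap u ` calW u W \<union> qmap u ` scrW1 u W"
  proof
    fix q assume "q \<in> qmap u ` W"
    then obtain w where w: "w \<in> W" "q = qmap u w" by blast
    show "q \<in> qmap u ` calW u W \<union> qmap u ` scrW1 u W"
    proof (cases "\<exists>v\<in>calW u W. w - v \<in> latt u")
      case True
      then obtain v where "v \<in> calW u W" "q = qmap u v" using w(2) qmap_eq_iff by blast
      then show ?thesis by blast
    next
      case False
      then have "w \<in> scrW1 u W"
        using scrW_if_not_congruent_calW[OF assms w(1)] unfolding scrW1_def by blast
      then show ?thesis using w(2) by blast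
    qed
  qed
qed

section \<open>Lifting the complement of the quotient\<close>

lemma admits_min_compl_quotE:
  assumes "admits_min_compl_quot u Q1 Q"
  obtains N where "N \<subseteq> quot u" "{setsum n q | n q. n \<in> N \<and> q \<in> Q \<union> Q1} = quot u"
    "\<forall>n\<in>N. \<exists>q\<in>Q1. \<forall>n'\<in>N - {n}. \<forall>q'\<in>Q \<union> Q1. setsum n q \<noteq> setsum n' q'"
  using assms unfolding admits_min_compl_quot_def by (elim conjE exE) (rule that)

lemma admits_min_compl_quot_lift:
  assumes zi: "zlin_indep u" and ep: "eventually_periodic u W"
    and adm: "admits_min_compl_quot u (qmap u ` scrW1 u W) (qmap u ` calW u W)"
  obtains M0 where "\<And>x l. x \<in> M0 \<Longrightarrow> l \<in> latt u \<Longrightarrow> x + l \<in> M0"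
    and "setsum M0 W = UNIV"
    and "\<And>m. m \<in> M0 \<Longrightarrow> \<exists>s\<in>scrW1 u W. \<forall>m'\<in>M0. \<forall>w\<in>W.
           m + s - (m' + w) \<in> latt u \<longrightarrow> m' - m \<in> latt u"
proof -
  obtain N where N: "N \<subseteq> quot u"
    and cover: "{setsum n q | n q. n \<in> N \<and> q \<in> qmap u ` calW u W \<union> qmap u ` scrW1 u W} = quot u"
    and wit: "\<forall>n\<in>N. \<exists>q\<in>qmap u ` scrW1 u W. \<forall>n'\<in>N - {n}.
                \<forall>q'\<in>qmap u ` calW u W \<union> qmap u ` scrW1 u W. setsum n q \<noteq> setsum n' q'"
    by (rule admits_min_compl_quotE[OF adm])
  note QW = qmap_calW_scrW1[OF zi ep]
  define M0 where "M0 = {x. qmap u x \<in> N}"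
  show ?thesis
  proof
    show "x + l \<in> M0" if "x \<in> M0" "l \<in> latt u" for x l
      using that qmap_eq_iff[of u "x + l" x] unfolding M0_def by simp
    show "setsum M0 W = UNIV"
    proof (intro set_eqI iffI)
      fix g :: "int^'a"
      have "qmap u g \<in> quot u" unfolding quot_def by blast
      then obtain n w where n: "n \<in> N" and w: "w \<in> W" and g: "qmap u g = setsum n (qmap u w)"
        unfolding cover[symmetric] QW by blast
      obtain a where a: "n = qmap u a" using n N unfolding quot_def by blast
      have "qmap u g = qmap u (a + w)" using g a by (simp add: setsum_qmap)
      then have "qmap u (g - w) = n" unfolding a qmap_eq_iff by (simp add: algebra_simps)
      then have "g - w \<in> M0" using n unfolding M0_def by simp
      then show "g \<in> setsum M0 W" unfolding setsum_iff using w by force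
    qed simp
    fix m assume m: "m \<in> M0"
    then obtain q where q: "q \<in> qmap u ` scrW1 u W"
      and q_priv: "\<forall>n'\<in>N - {qmap u m}. \<forall>q'\<in>qmap u ` W. setsum (qmap u m) q \<noteq> setsum n' q'"
      using wit unfolding M0_def QW by blast
    obtain s where s: "s \<in> scrW1 u W" "q = qmap u s" using q by blast
    have "m' - m \<in> latt u" if "m' \<in> M0" "w \<in> W" "m + s - (m' + w) \<in> latt u" for m' w
    proof -
      have "setsum (qmap u m) q = setsum (qmap u m') (qmap u w)"
        using that(3) s(2) by (simp add: setsum_qmap qmap_eq_iff)
      then have "qmap u m' = qmap u m"
        using q_priv that(1,2) unfolding M0_def by blast
      then show ?thesis by (simp add: qmap_eq_iff)
    qed
    then show "\<exists>s\<in>scrW1 u W. \<forall>m'\<in>M0. \<forall>w\<in>W. m + s - (m' + w) \<in> latt u \<longrightarrow> m' - m \<in> latt u"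
      using s(1) by blast
  qed
qed

section \<open>Sets periodic modulo c Z^d\<close>

definition period_box :: "int \<Rightarrow> (int^'d::finite) set" where
  "period_box c = {x. \<forall>i. 0 \<le> x $ i \<and> x $ i < c}"

lemma finite_period_box: "finite (period_box c :: (int^'d::finite) set)"
proof -
  have "vec_nth ` period_box c \<subseteq> PiE UNIV (\<lambda>_. {0..<c})"
    unfolding period_box_def by (auto simp: PiE_def extensional_def)
  moreover have "finite (PiE (UNIV :: 'd set) (\<lambda>_. {0..<c}))" by (simp add: finite_PiE)
  ultimately have "finite (vec_nth ` (period_box c :: (int^'d) set))" by (rule finite_subset)
  moreover have "inj_on vec_nth (period_box c)" by (simp add: inj_on_def vec_nth_inject)
  ultimately show ?thesis using finite_imageD by blast
qed

lemma ex_translate_into_period_box: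
  fixes x :: "int^'d::finite"
  assumes "c > 0"
  shows "\<exists>v. x + c *s v \<in> period_box c"
proof
  have "(x + c *s (- (\<chi> i. x $ i div c))) $ i = x $ i mod c" for i
    by (simp add: algebra_simps minus_div_mult_eq_mod)
  then show "x + c *s (- (\<chi> i. x $ i div c)) \<in> period_box c"
    unfolding period_box_def using assms by simp
qed

definition periodic :: "int \<Rightarrow> (int^'d::finite) set \<Rightarrow> bool" where
  "periodic c M \<longleftrightarrow> (\<forall>x\<in>M. \<forall>v. x + c *s v \<in> M)"

definition remove_class :: "int \<Rightarrow> int^'d::finite \<Rightarrow> (int^'d) set \<Rightarrow> (int^'d) set" where
  "remove_class c m M = {x \<in> M. \<forall>v. x \<noteq> m + c *s v}"

lemma periodic_remove_class:
  assumes "periodic c M"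
  shows "periodic c (remove_class c m M)"
  unfolding periodic_def
proof (intro ballI allI)
  fix x v assume x: "x \<in> remove_class c m M"
  have "x + c *s v \<noteq> m + c *s v'" for v'
  proof
    assume "x + c *s v = m + c *s v'"
    then have "x = m + c *s (v' - v)" by (simp add: vec_eq_iff algebra_simps)
    then show False using x unfolding remove_class_def by blast
  qed
  then show "x + c *s v \<in> remove_class c m M"
    using x assms unfolding remove_class_def periodic_def by blast
qed

lemma remove_class_period_box_psubset:
  assumes "c > 0" "periodic c M" "m \<in> M"
  shows "remove_class c m M \<inter> period_box c \<subset> M \<inter> period_box c"
proof
  show "remove_class c m M \<inter> period_box c \<subseteq> M \<inter> period_box c" unfolding remove_class_def by blast
  obtain v where v: "m + c *s v \<in> period_box c" using ex_translate_into_period_box[OF assms(1)] by blast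
  then have "m + c *s v \<in> M \<inter> period_box c" using assms(2,3) unfolding periodic_def by blast
  moreover have "m + c *s v \<notin> remove_class c m M" unfolding remove_class_def by blast
  ultimately show "remove_class c m M \<inter> period_box c \<noteq> M \<inter> period_box c" by blast
qed

lemma eq_0_if_abs_less_multiple:
  fixes x k t :: int
  assumes "\<bar>x\<bar> < k" "x = k * t"
  shows "x = 0"
proof (rule ccontr)
  assume "x \<noteq> 0"
  then have "1 \<le> \<bar>t\<bar>" using assms(2) by (cases "t > 0") auto
  then have "\<bar>k\<bar> \<le> \<bar>k\<bar> * \<bar>t\<bar>" using mult_left_mono[of 1 "\<bar>t\<bar>" "\<bar>k\<bar>"] by simp
  then have "k \<le> \<bar>x\<bar>" using assms(2) abs_ge_self[of k] by (simp add: abs_mult)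
  then show False using assms(1) by linarith
qed

lemma eq_if_diff_small_multiple:
  fixes a b :: "int^'d::finite"
  assumes "\<forall>i. \<bar>(a - b) $ i\<bar> < c" and "a - b = c *s v"
  shows "a = b"
proof -
  have "(a - b) $ i = 0" for i
    using assms by (intro eq_0_if_abs_less_multiple[of _ c "v $ i"]) simp_all
  then show ?thesis by (simp add: vec_eq_iff)
qed

text \<open>Moving m by c times the lattice vector -(|a_1| u_1 + ... + |a_d| u_d) stays inside M and
  makes every coefficient of x - m - z nonnegative, so x lands in the cone above z, inside W.\<close>
lemma mem_setsum_if_congruent_calW:
  assumes "c > 0" "periodic c M" "m \<in> M" "z \<in> calW u W" "x - m - z \<in> latt u"
  shows "x \<in> setsum M W"
proof -
  obtain a where a: "x - m - z = lincomb u a" using assms(5) unfolding mem_latt_iff by blast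
  define m' where "m' = m + c *s lincomb u (\<lambda>i. - \<bar>a i\<bar>)"
  have m': "m' \<in> M" using assms(2,3) unfolding m'_def periodic_def by blast
  have "x - m' - z = lincomb u a - lincomb u (\<lambda>i. c * - \<bar>a i\<bar>)"
    unfolding m'_def lincomb_scale a[symmetric] by (simp add: algebra_simps)
  also have "\<dots> = lincomb u (\<lambda>i. a i - c * - \<bar>a i\<bar>)" by (rule lincomb_diff)
  finally have p: "x - m' - z = lincomb u (\<lambda>i. a i - c * - \<bar>a i\<bar>)" .
  have nonneg: "\<forall>i. a i - c * - \<bar>a i\<bar> \<ge> 0"
  proof
    fix i
    have "c * \<bar>a i\<bar> \<ge> \<bar>a i\<bar>" using assms(1) by (simp add: mult_le_cancel_right1)
    then show "a i - c * - \<bar>a i\<bar> \<ge> 0" by linarith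
  qed
  have "x - m' - z \<in> cone u"
    unfolding mem_cone_iff p by (intro exI[of _ "\<lambda>i. a i - c * - \<bar>a i\<bar>"] conjI nonneg refl)
  then have "z + (x - m' - z) \<in> W" by (rule calW_add_cone[OF assms(4)])
  then show ?thesis
    unfolding setsum_iff by (intro bexI[OF _ m'] bexI[of _ "z + (x - m' - z)"]) simp_all
qed

lemma ex_coordinate_bound:
  fixes S :: "(int^'d::finite) set"
  assumes "finite S"
  obtains k where "k > int (card S)" "\<And>a b i. a \<in> S \<Longrightarrow> b \<in> S \<Longrightarrow> \<bar>(a - b) $ i\<bar> < k"
proof
  define T where "T = (\<lambda>(a, b, i). \<bar>(a - b) $ i\<bar>) ` (S \<times> S \<times> (UNIV :: 'd set))"
  have "finite T" unfolding T_def using assms by simp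
  show "int (card S) + Max (insert 0 T) + 1 > int (card S)"
    using Max_ge[OF finite_insert[THEN iffD2, OF \<open>finite T\<close>], of 0] by simp
  fix a b i assume "a \<in> S" "b \<in> S"
  then have "\<bar>(a - b) $ i\<bar> \<in> insert 0 T" unfolding T_def by force
  then have "\<bar>(a - b) $ i\<bar> \<le> Max (insert 0 T)" using \<open>finite T\<close> by simp
  then show "\<bar>(a - b) $ i\<bar> < int (card S) + Max (insert 0 T) + 1" by simp
qed

section \<open>A periodic complement with fewest points in a box\<close>

text \<open>M0 stands for pi^-1(N): a union of cosets of L complementing W in which every class owns a
  witness s in scrW1, the lifted form of condition (ii).\<close>
locale lifted_complement =
  fixes u :: "'d::finite \<Rightarrow> int^'d" and W M0 :: "(int^'d) set" and D k :: int
  assumes zi: "zlin_indep u" and ep: "eventually_periodic u W"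
    and M0_latt: "\<And>x l. x \<in> M0 \<Longrightarrow> l \<in> latt u \<Longrightarrow> x + l \<in> M0"
    and M0_complement: "setsum M0 W = UNIV"
    and M0_witness: "\<And>m. m \<in> M0 \<Longrightarrow> \<exists>s\<in>scrW1 u W. \<forall>m'\<in>M0. \<forall>w\<in>W.
           m + s - (m' + w) \<in> latt u \<longrightarrow> m' - m \<in> latt u"
    and D_pos: "D > 0" and D_latt: "\<And>g. D *s g \<in> latt u"
    and k_card: "k > int (card (scrW u W))"
    and k_diff: "\<And>a b i. a \<in> scrW u W \<Longrightarrow> b \<in> scrW u W \<Longrightarrow> \<bar>(a - b) $ i\<bar> < k"
begin

definition c :: int where "c = D * k"

lemma k_pos: "k > 0"
  using k_card by linarith

lemma c_pos: "c > 0"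
  unfolding c_def using D_pos k_pos by simp

lemma k_le_c: "k \<le> c"
  unfolding c_def using D_pos k_pos by (simp add: mult_le_cancel_right1)

lemma c_latt: "c *s v \<in> latt u"
  using D_latt[of "k *s v"] unfolding c_def by (simp add: vector_smult_assoc)

definition candidates :: "(int^'d) set set" where
  "candidates = {M. M \<subseteq> M0 \<and> periodic c M \<and> setsum M W = UNIV}"

lemma M0_candidate: "M0 \<in> candidates"
  unfolding candidates_def periodic_def using M0_latt c_latt M0_complement by blast

lemma witness_decomposition:
  assumes s: "s \<in> scrW1 u W"
    and s_wit: "\<forall>m'\<in>M0. \<forall>w\<in>W. m + s - (m' + w) \<in> latt u \<longrightarrow> m' - m \<in> latt u"
    and m': "m' \<in> M0" and w: "w \<in> W" and congr: "m' + w - (m + s) \<in> latt u"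
  shows "m' - m \<in> latt u \<and> w \<in> scrW u W"
proof -
  have "m + s - (m' + w) = 0 - (m' + w - (m + s))" by (simp add: algebra_simps)
  moreover have "0 - (m' + w - (m + s)) \<in> latt u" by (rule latt_diff[OF zero_in_latt congr])
  ultimately have "m + s - (m' + w) \<in> latt u" by (simp only:)
  then have mm: "m' - m \<in> latt u" using s_wit m' w by blast
  have "w - s = (m' + w - (m + s)) - (m' - m)" by (simp add: algebra_simps)
  moreover have "(m' + w - (m + s)) - (m' - m) \<in> latt u" by (rule latt_diff[OF congr mm])
  ultimately have "w - s \<in> latt u" by (simp only:)
  then have "w \<in> scrW u W" using scrW1_congruent[OF zi ep s w] scrW1_subset by blast
  with mm show ?thesis by blast
qed

text \<open>Decompose the k points g_j = m + s + j D (1,...,1) along M + W, where s witnesses the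
  class of m. By the witness property each summand from M is congruent to m and each summand
  from W lies in scrW; if the former all lay in m + c Z^d, the latter would be k distinct
  elements of scrW.\<close>
lemma candidate_meets_class_twice:
  assumes M: "M \<in> candidates" and m: "m \<in> M"
  shows "\<exists>m'\<in>remove_class c m M. m' - m \<in> latt u"
proof (rule ccontr)
  assume "\<not> ?thesis"
  then have same_class: "\<exists>v. m' = m + c *s v" if "m' \<in> M" "m' - m \<in> latt u" for m'
    using that unfolding remove_class_def by blast
  have MM0: "M \<subseteq> M0" and MW: "setsum M W = UNIV" using M unfolding candidates_def by auto
  obtain s where s: "s \<in> scrW1 u W"
    and s_wit: "\<forall>m'\<in>M0. \<forall>w\<in>W. m + s - (m' + w) \<in> latt u \<longrightarrow> m' - m \<in> latt u"
    using M0_witness m MM0 by blast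
  define g where "g j = m + s + (j * D) *s (\<chi> i. 1)" for j :: int
  have "\<exists>mj\<in>M. \<exists>wj\<in>W. g j = mj + wj" for j
    using MW unfolding setsum_iff[symmetric] by simp
  then obtain mf wf where mf: "\<And>j. mf j \<in> M" and wf: "\<And>j. wf j \<in> W"
    and g_split: "\<And>j. g j = mf j + wf j"
    by metis
  have "g j - (m + s) \<in> latt u" for j
    using D_latt[of "j *s (\<chi> i. 1)"] unfolding g_def by (simp add: vector_smult_assoc mult.commute)
  then have "mf j - m \<in> latt u \<and> wf j \<in> scrW u W" for j
    using witness_decomposition[OF s s_wit _ wf] mf MM0 unfolding g_split by blast
  then have "\<forall>j. \<exists>v. mf j = m + c *s v" and wf_scrW: "\<And>j. wf j \<in> scrW u W"
    using same_class[OF mf] by blast+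
  then obtain vf where vf: "\<And>j. mf j = m + c *s vf j" by metis
  have "inj_on wf {0..<k}"
  proof (rule inj_onI)
    fix j j' assume j: "j \<in> {0..<k}" "j' \<in> {0..<k}" and eq: "wf j = wf j'"
    fix i :: 'd
    have "g j - g j' = mf j - mf j'" using g_split[of j] g_split[of j'] eq by simp
    then have "D * (j - j') = D * (k * (vf j $ i - vf j' $ i))"
      using vf[of j] vf[of j'] unfolding g_def c_def by (simp add: vec_eq_iff algebra_simps)
    then have "j - j' = k * (vf j $ i - vf j' $ i)" using D_pos by simp
    then have "j - j' = 0" using j by (intro eq_0_if_abs_less_multiple) auto
    then show "j = j'" by simp
  qed
  then have "card (wf ` {0..<k}) = nat k" by (simp add: card_image)
  moreover have "card (wf ` {0..<k}) \<le> card (scrW u W)"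
    using finite_scrW[OF ep] wf_scrW by (intro card_mono) auto
  ultimately show False using k_card by linarith
qed

lemma class_removal_forces_equality:
  assumes M: "M \<in> candidates" and m: "m \<in> M" and w: "w \<in> W" and w': "w' \<in> W"
    and sum_eq: "m + w = m' + w'" and v': "m' = m + c *s v'"
    and not_reached: "m + w \<notin> setsum (remove_class c m M) W"
  shows "m' = m"
proof (cases "\<exists>z\<in>calW u W. w - z \<in> latt u")
  case True
  then obtain z where z: "z \<in> calW u W" "w - z \<in> latt u" by blast
  obtain m3 where m3: "m3 \<in> remove_class c m M" "m3 - m \<in> latt u"
    using candidate_meets_class_twice[OF M m] by blast
  have "(m + w) - m3 - z = (w - z) - (m3 - m)" by (simp add: algebra_simps)
  moreover have "(w - z) - (m3 - m) \<in> latt u" by (rule latt_diff[OF z(2) m3(2)])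
  ultimately have congr: "(m + w) - m3 - z \<in> latt u" by (simp only:)
  have "periodic c (remove_class c m M)"
    using M periodic_remove_class unfolding candidates_def by blast
  then have "m + w \<in> setsum (remove_class c m M) W"
    by (rule mem_setsum_if_congruent_calW[OF c_pos _ m3(1) z(1) congr])
  then show ?thesis using not_reached by blast
next
  case False
  then have wS: "w \<in> scrW u W" using scrW_if_not_congruent_calW[OF zi ep w] by blast
  have "w - w' = m' - m" using sum_eq by (simp add: algebra_simps)
  also have "\<dots> = c *s v'" using v' by simp
  finally have ww: "w - w' = c *s v'" .
  have "\<forall>z\<in>calW u W. w' - z \<notin> latt u"
  proof (intro ballI notI)
    fix z assume z: "z \<in> calW u W" "w' - z \<in> latt u"
    have "w - z = (w' - z) + c *s v'" using ww by (simp add: algebra_simps)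
    moreover have "(w' - z) + c *s v' \<in> latt u" by (rule latt_add[OF z(2) c_latt])
    ultimately have "w - z \<in> latt u" by (simp only:)
    then show False using False z(1) by blast
  qed
  then have w'S: "w' \<in> scrW u W" using scrW_if_not_congruent_calW[OF zi ep w'] by blast
  have "\<forall>i. \<bar>(w - w') $ i\<bar> < c" using k_diff[OF wS w'S] k_le_c by (meson order_less_le_trans)
  then have "w = w'" using eq_if_diff_small_multiple ww by blast
  then show ?thesis using sum_eq by simp
qed

lemma least_candidate_class_needed:
  assumes M: "M \<in> candidates" and m: "m \<in> M"
    and least: "\<And>M'. M' \<in> candidates \<Longrightarrow> card (M \<inter> period_box c) \<le> card (M' \<inter> period_box c)"
  obtains w where "w \<in> W" "m + w \<notin> setsum (remove_class c m M) W"
proof -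
  have MM0: "M \<subseteq> M0" and per: "periodic c M" and MW: "setsum M W = UNIV"
    using M unfolding candidates_def by auto
  define R where "R = remove_class c m M"
  have perR: "periodic c R" unfolding R_def by (rule periodic_remove_class[OF per])
  have "card (R \<inter> period_box c) < card (M \<inter> period_box c)"
    unfolding R_def using remove_class_period_box_psubset[OF c_pos per m] finite_period_box
    by (meson finite_Int psubset_card_mono)
  then have "R \<notin> candidates" using least by (meson not_le)
  moreover have "R \<subseteq> M0" using MM0 unfolding R_def remove_class_def by blast
  ultimately have "setsum R W \<noteq> UNIV" using perR unfolding candidates_def by blast
  then obtain g where g: "g \<notin> setsum R W" by blast
  have "g \<in> setsum M W" using MW by simp
  then obtain m1 w where m1: "m1 \<in> M" and w: "w \<in> W" and g_eq: "g = m1 + w"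
    unfolding setsum_iff by blast
  have "m1 \<notin> R"
  proof
    assume "m1 \<in> R"
    then have "g \<in> setsum R W" unfolding setsum_iff using w g_eq by blast
    then show False using g by blast
  qed
  then obtain v where v: "m1 = m + c *s v" using m1 unfolding R_def remove_class_def by blast
  have "m + w \<notin> setsum R W"
  proof
    assume "m + w \<in> setsum R W"
    then obtain r w2 where r: "r \<in> R" and w2: "w2 \<in> W" and r_eq: "m + w = r + w2"
      unfolding setsum_iff by blast
    have "r + c *s v \<in> R" using perR r unfolding periodic_def by blast
    moreover have "g = (r + c *s v) + w2" using g_eq v r_eq by (simp add: algebra_simps)
    ultimately have "g \<in> setsum R W" unfolding setsum_iff using w2 by blast
    then show False using g by blast
  qed
  then show ?thesis using that w unfolding R_def by blast
qed

lemma least_candidate_is_min_complement: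
  assumes M: "M \<in> candidates"
    and least: "\<And>M'. M' \<in> candidates \<Longrightarrow> card (M \<inter> period_box c) \<le> card (M' \<inter> period_box c)"
  shows "is_min_complement M W"
proof -
  have MW: "setsum M W = UNIV" using M unfolding candidates_def by auto
  then have "M \<noteq> {}" unfolding setsum_def by auto
  then have compl: "is_complement M W" unfolding is_complement_def using MW by simp
  have "\<not> is_complement M' W" if sub: "M' \<subset> M" for M'
  proof
    assume "is_complement M' W"
    then have M'W: "setsum M' W = UNIV" unfolding is_complement_def by simp
    obtain m where m: "m \<in> M" "m \<notin> M'" using sub by blast
    obtain w where w: "w \<in> W" and not_reached: "m + w \<notin> setsum (remove_class c m M) W"
      using least_candidate_class_needed[OF M m(1) least] by blast
    have "m + w \<in> setsum M' W" using M'W by simp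
    then obtain m' w' where m': "m' \<in> M'" and w': "w' \<in> W" and sum_eq: "m + w = m' + w'"
      unfolding setsum_iff by blast
    have "m' \<notin> remove_class c m M"
    proof
      assume "m' \<in> remove_class c m M"
      then have "m + w \<in> setsum (remove_class c m M) W" unfolding setsum_iff using w' sum_eq by blast
      then show False using not_reached by blast
    qed
    then obtain v' where "m' = m + c *s v'" using m' sub unfolding remove_class_def by blast
    then have "m' = m"
      using class_removal_forces_equality[OF M m(1) w w' sum_eq _ not_reached] by blast
    then show False using m' m(2) by blast
  qed
  then show ?thesis unfolding is_min_complement_def using compl by blast
qed

lemma ex_min_complement: "\<exists>M. is_min_complement M W"
proof -
  obtain M where "M \<in> candidates"
    and "\<forall>M'. M' \<in> candidates \<longrightarrow> card (M \<inter> period_box c) \<le> card (M' \<inter> period_box c)"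
    using ex_has_least_nat[of "\<lambda>M. M \<in> candidates" M0 "\<lambda>M. card (M \<inter> period_box c)"] M0_candidate
    by blast
  then show ?thesis using least_candidate_is_min_complement by blast
qed

end

theorem lemma4p17:
  fixes u :: "'d::finite \<Rightarrow> int^'d" and W :: "(int^'d) set"
  assumes "zlin_indep u"
    and "eventually_periodic u W"
    and "admits_min_compl_quot u (qmap u ` scrW1 u W) (qmap u ` calW u W)"
  shows "\<exists>M. is_min_complement M W"
proof -
  obtain M0 where M0: "\<And>x l. x \<in> M0 \<Longrightarrow> l \<in> latt u \<Longrightarrow> x + l \<in> M0"
    "setsum M0 W = UNIV"
    "\<And>m. m \<in> M0 \<Longrightarrow> \<exists>s\<in>scrW1 u W. \<forall>m'\<in>M0. \<forall>w\<in>W.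
       m + s - (m' + w) \<in> latt u \<longrightarrow> m' - m \<in> latt u"
    using admits_min_compl_quot_lift[OF assms] by blast
  obtain D where D: "D > 0" "\<And>g. D *s g \<in> latt u"
    using latt_contains_multiples[OF assms(1)] by blast
  obtain k where k: "k > int (card (scrW u W))"
    "\<And>a b i. a \<in> scrW u W \<Longrightarrow> b \<in> scrW u W \<Longrightarrow> \<bar>(a - b) $ i\<bar> < k"
    using ex_coordinate_bound[OF finite_scrW[OF assms(2)]] by blast
  interpret lifted_complement u W M0 D k
    by (rule lifted_complement.intro) (fact assms(1,2) M0 D k)+
  show ?thesis by (rule ex_min_complement)
qed

end
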